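(* Let $q\ge 4$ be a power of $2$. Then there exists a linear AOA$(2,3,q+1,q)$.
   Context: An orthogonal array OA$(t,k,v)$ (with $1\le t\le k$) is a $v^t\times k$ array with entries from a set $X$ of size $v$ such that, for every choice of $t$ of its columns, each $t$-tuple in $X^t$ appears exactly once as a row of the corresponding $v^t\times t$ subarray. For integers $1\le s\le t\le k$, an augmented orthogonal array AOA$(s,t,k,v)$ is a $v^t\times(k+1)$ array $A$ such that: (1) the first $k$ columns of $A$ form an OA$(t,k,v)$ on a symbol set $X$ of size $v$; (2) the last column of $A$ has entries from a set $Y$ of size $v^{t-s}$; (3) for any choice of $s$ of the first $k$ columns, these $s$ columns together with the last column contain every $(s+1)$-tuple of $X^s\times Y$ exactly once as a row. For a prime power $q$, an AOA$(s,t,k,q)$ is linear if $X=\mathbb{F}_q$, $Y=\mathbb{F}_q^{t-s}$, and its set of rows, regarded as vectors in $\mathbb{F}_q^{k}\times\mathbb{F}_q^{t-s}=\mathbb{F}_q^{k+t-s}$, is an $\mathbb{F}_q$-linear subspace. *)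

theory Defs
  imports Main "HOL-Library.FuncSet"
begin

text \<open>An array with k columns over symbol set X is represented by the set of its rows,
  each row a list of length k (column i is entry i). Since every t-subset of columns
  of an OA determines rows uniquely, rows of an OA are distinct, so a set suffices;
  "each t-tuple appears exactly once" is a bijection between rows and tuples.\<close>

definition is_OA :: "nat \<Rightarrow> nat \<Rightarrow> 'x set \<Rightarrow> 'x list set \<Rightarrow> bool" where
  "is_OA t k X R \<longleftrightarrow> 1 \<le> t \<and> t \<le> k \<and> finite R \<and> card R = card X ^ t \<and>
     (\<forall>r\<in>R. length r = k \<and> set r \<subseteq> X) \<and>
     (\<forall>C. C \<subseteq> {..<k} \<and> card C = t \<longrightarrow>
        bij_betw (\<lambda>r. restrict (\<lambda>i. r ! i) C) R (PiE C (\<lambda>_. X)))"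

definition is_AOA :: "nat \<Rightarrow> nat \<Rightarrow> nat \<Rightarrow> 'x set \<Rightarrow> 'y set \<Rightarrow> ('x list \<times> 'y) set \<Rightarrow> bool" where
  "is_AOA s t k X Y A \<longleftrightarrow> 1 \<le> s \<and> s \<le> t \<and> t \<le> k \<and> finite A \<and> card A = card X ^ t \<and>
     inj_on fst A \<and> is_OA t k X (fst ` A) \<and>
     card Y = card X ^ (t - s) \<and> (\<forall>a\<in>A. snd a \<in> Y) \<and>
     (\<forall>C. C \<subseteq> {..<k} \<and> card C = s \<longrightarrow>
        bij_betw (\<lambda>(r, y). (restrict (\<lambda>i. r ! i) C, y)) A (PiE C (\<lambda>_. X) \<times> Y))"

definition is_lin_subspace :: "nat \<Rightarrow> 'a::field list set \<Rightarrow> bool" where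
  "is_lin_subspace n V \<longleftrightarrow> V \<noteq> {} \<and> (\<forall>u\<in>V. length u = n) \<and>
     (\<forall>u\<in>V. \<forall>w\<in>V. map2 (+) u w \<in> V) \<and> (\<forall>u\<in>V. \<forall>c. map ((*) c) u \<in> V)"

text \<open>Linear AOA(s,t,k,q) over the finite field 'a: X = F_q, Y = F_q^(t-s) (lists of
  length t-s), and the rows, viewed as vectors r @ y in F_q^(k+t-s), form a subspace.\<close>

definition is_linear_AOA :: "nat \<Rightarrow> nat \<Rightarrow> nat \<Rightarrow> ('a::{finite,field} list \<times> 'a list) set \<Rightarrow> bool" where
  "is_linear_AOA s t k A \<longleftrightarrow>
     is_AOA s t k (UNIV :: 'a set) {y. length y = t - s} A \<and>
     is_lin_subspace (k + (t - s)) ((\<lambda>(r, y). r @ y) ` A)"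

end

theory Submission
  imports Defs "HOL-Number_Theory.Residues"
begin

text \<open>Index the rows by coefficient vectors x in F_q^3 and the columns by points p in F_q^3,
  the entry being the dot product p \<cdot> x. Three columns determine the row iff their points are
  linearly independent. Take for the first q + 1 columns the points (1, t, t^2) of a conic
  together with (0, 0, 1): no three of them are collinear (Vandermonde),
  giving an OA(3, q + 1, q). For the extra column take the nucleus (0, 1, 0): since q is even,
  all tangents of the conic pass through it, so it lies on no secant, i.e. any two conic points
  together with the nucleus are independent, which is exactly the AOA condition for s = 2.\<close>

lemma bij_betw_if_inj_on_card_eq:
  assumes "inj_on f A" "f ` A \<subseteq> B" "finite B" "card A = card B"
  shows "bij_betw f A B"
  using assms card_image card_subset_eq unfolding bij_betw_def by metis

lemma is_OA_if_columns_separate: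
  fixes r :: "'m \<Rightarrow> 'x list"
  assumes "1 \<le> t" "t \<le> k" "finite M" "finite X" "card M = card X ^ t"
    and length: "\<And>m. m \<in> M \<Longrightarrow> length (r m) = k"
    and entries: "\<And>m. m \<in> M \<Longrightarrow> set (r m) \<subseteq> X"
    and separate: "\<And>C m m'. C \<subseteq> {..<k} \<Longrightarrow> card C = t \<Longrightarrow> m \<in> M \<Longrightarrow> m' \<in> M \<Longrightarrow>
      (\<forall>i\<in>C. r m ! i = r m' ! i) \<Longrightarrow> m = m'"
  shows "is_OA t k X (r ` M)"
proof -
  have inj: "inj_on r M"
    using separate[of "{..<t}"] \<open>t \<le> k\<close> by (auto simp: inj_on_def)
  have "bij_betw (\<lambda>row. restrict (\<lambda>i. row ! i) C) (r ` M) (PiE C (\<lambda>_. X))"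
    if C: "C \<subseteq> {..<k}" "card C = t" for C
  proof (rule bij_betw_if_inj_on_card_eq)
    show "inj_on (\<lambda>row. restrict (\<lambda>i. row ! i) C) (r ` M)"
      using separate[OF C] by (fastforce simp: inj_on_def restrict_def fun_eq_iff)
    show "(\<lambda>row. restrict (\<lambda>i. row ! i) C) ` r ` M \<subseteq> PiE C (\<lambda>_. X)"
      using C length entries by (fastforce intro: nth_mem)
    show "finite (PiE C (\<lambda>_. X))"
      using C \<open>finite X\<close> by (auto intro: finite_PiE finite_subset)
    show "card (r ` M) = card (PiE C (\<lambda>_. X))"
      using C inj \<open>card M = card X ^ t\<close> by (simp add: card_image card_PiE finite_subset)
  qed
  then show ?thesis
    using assms inj by (auto simp: is_OA_def card_image)
qed

lemma is_AOA_if_columns_separate: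
  fixes r :: "'m \<Rightarrow> 'x list" and y :: "'m \<Rightarrow> 'y"
  assumes "1 \<le> s" "s \<le> t" "finite M" "finite X" "finite Y"
    and OA: "is_OA t k X (r ` M)" and inj: "inj_on r M"
    and "card Y = card X ^ (t - s)" and last: "\<And>m. m \<in> M \<Longrightarrow> y m \<in> Y"
    and separate: "\<And>C m m'. C \<subseteq> {..<k} \<Longrightarrow> card C = s \<Longrightarrow> m \<in> M \<Longrightarrow> m' \<in> M \<Longrightarrow>
      (\<forall>i\<in>C. r m ! i = r m' ! i) \<Longrightarrow> y m = y m' \<Longrightarrow> m = m'"
  shows "is_AOA s t k X Y ((\<lambda>m. (r m, y m)) ` M)"
proof -
  let ?A = "(\<lambda>m. (r m, y m)) ` M"
  have card_M: "card M = card X ^ t"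
    using OA inj by (simp add: is_OA_def card_image)
  have inj_A: "inj_on (\<lambda>m. (r m, y m)) M"
    using inj by (auto simp: inj_on_def)
  have "bij_betw (\<lambda>(row, z). (restrict (\<lambda>i. row ! i) C, z)) ?A (PiE C (\<lambda>_. X) \<times> Y)"
    if C: "C \<subseteq> {..<k}" "card C = s" for C
  proof (rule bij_betw_if_inj_on_card_eq)
    show "inj_on (\<lambda>(row, z). (restrict (\<lambda>i. row ! i) C, z)) ?A"
      using separate[OF C] by (fastforce simp: inj_on_def restrict_def fun_eq_iff)
    show "(\<lambda>(row, z). (restrict (\<lambda>i. row ! i) C, z)) ` ?A \<subseteq> PiE C (\<lambda>_. X) \<times> Y"
      using C OA last unfolding is_OA_def by (fastforce intro: nth_mem)
    show "finite (PiE C (\<lambda>_. X) \<times> Y)"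
      using C assms(4,5) by (auto intro: finite_PiE finite_subset)
    have "card X ^ s * card X ^ (t - s) = card X ^ t"
      using \<open>s \<le> t\<close> by (simp flip: power_add)
    then show "card ?A = card (PiE C (\<lambda>_. X) \<times> Y)"
      using C inj_A card_M \<open>card Y = card X ^ (t - s)\<close>
      by (simp add: card_image card_PiE card_cartesian_product finite_subset)
  qed
  moreover have "fst ` ?A = r ` M"
    by (simp add: image_image)
  moreover have "inj_on fst ?A"
    using inj by (auto simp: inj_on_def)
  ultimately show ?thesis
    using assms card_M inj_A by (auto simp: is_AOA_def is_OA_def card_image)
qed

fun dot3 :: "'a::comm_ring_1 \<times> 'a \<times> 'a \<Rightarrow> 'a \<times> 'a \<times> 'a \<Rightarrow> 'a" where
  "dot3 (u1, u2, u3) (x1, x2, x3) = u1 * x1 + u2 * x2 + u3 * x3"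

fun det3 :: "'a::comm_ring_1 \<times> 'a \<times> 'a \<Rightarrow> 'a \<times> 'a \<times> 'a \<Rightarrow> 'a \<times> 'a \<times> 'a \<Rightarrow> 'a" where
  "det3 (u1, u2, u3) (v1, v2, v3) (w1, w2, w3) =
     u1 * (v2 * w3 - v3 * w2) - u2 * (v1 * w3 - v3 * w1) + u3 * (v1 * w2 - v2 * w1)"

text \<open>Cramer's rule: det(u, v, w) \<cdot> x is a combination of the three dot products, with
  the cofactors as coefficients.\<close>

lemma eq_if_dot3_eq_det3_nonzero:
  fixes u v w x x' :: "'a::field \<times> 'a \<times> 'a"
  assumes "det3 u v w \<noteq> 0"
    and "dot3 u x = dot3 u x'" "dot3 v x = dot3 v x'" "dot3 w x = dot3 w x'"
  shows "x = x'"
proof -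
  obtain u1 u2 u3 v1 v2 v3 w1 w2 w3
    where uvw: "u = (u1, u2, u3)" "v = (v1, v2, v3)" "w = (w1, w2, w3)"
    by (metis prod.exhaust)
  obtain x1 x2 x3 x1' x2' x3' where xx: "x = (x1, x2, x3)" "x' = (x1', x2', x3')"
    by (metis prod.exhaust)
  define du dv dw
    where "du = dot3 u x - dot3 u x'" and "dv = dot3 v x - dot3 v x'" and "dw = dot3 w x - dot3 w x'"
  have "det3 u v w * (x1 - x1') =
      du * (v2 * w3 - v3 * w2) + dv * (w2 * u3 - w3 * u2) + dw * (u2 * v3 - u3 * v2)"
    "det3 u v w * (x2 - x2') =
      du * (v3 * w1 - v1 * w3) + dv * (w3 * u1 - w1 * u3) + dw * (u3 * v1 - u1 * v3)"
    "det3 u v w * (x3 - x3') =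
      du * (v1 * w2 - v2 * w1) + dv * (w1 * u2 - w2 * u1) + dw * (u1 * v2 - u2 * v1)"
    unfolding du_def dv_def dw_def uvw xx by (simp_all add: algebra_simps)
  moreover have "du = 0" "dv = 0" "dw = 0"
    using assms(2-4) by (simp_all add: du_def dv_def dw_def)
  ultimately show ?thesis
    using assms(1) xx by simp
qed

lemma dot3_add: "dot3 u (a, b, c) + dot3 u (a', b', c') = dot3 u (a + a', b + b', c + c')"
  by (cases u) (simp add: algebra_simps)

lemma dot3_scale: "d * dot3 u (a, b, c) = dot3 u (d * a, d * b, d * c)"
  by (cases u) (simp add: algebra_simps)

definition aoa_of_points :: "(nat \<Rightarrow> 'a::comm_ring_1 \<times> 'a \<times> 'a) \<Rightarrow> nat \<Rightarrow> ('a list \<times> 'a list) set"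
  where "aoa_of_points P k = (\<lambda>x. (map (\<lambda>i. dot3 (P i) x) [0..<k], [dot3 (P k) x])) ` UNIV"

lemma is_lin_subspace_aoa_of_points:
  "is_lin_subspace (k + 1) ((\<lambda>(r, y). r @ y) ` aoa_of_points P k)"
proof -
  have codewords: "(\<lambda>(r, y). r @ y) ` aoa_of_points P k = range (\<lambda>x. map (\<lambda>i. dot3 (P i) x) [0..<k + 1])"
    by (simp add: aoa_of_points_def image_image)
  have sum: "map2 (+) (map (\<lambda>i. dot3 (P i) (a, b, c)) ns) (map (\<lambda>i. dot3 (P i) (a', b', c')) ns) =
      map (\<lambda>i. dot3 (P i) (a + a', b + b', c + c')) ns" for a b c a' b' c' ns
    by (simp add: map2_map_map dot3_add)
  have scale: "map ((*) d) (map (\<lambda>i. dot3 (P i) (a, b, c)) ns) =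
      map (\<lambda>i. dot3 (P i) (d * a, d * b, d * c)) ns" for d a b c ns
    by (simp add: dot3_scale)
  show ?thesis
    unfolding codewords is_lin_subspace_def
    by (auto simp: sum scale simp del: upt_Suc map_map)
qed

text \<open>Projectively: the first k points form an arc and point k lies on none of its secants.\<close>

lemma is_linear_AOA_aoa_of_points:
  fixes P :: "nat \<Rightarrow> 'a::{finite,field} \<times> 'a \<times> 'a"
  assumes "3 \<le> k"
    and no_three_collinear: "\<And>i j l. i < k \<Longrightarrow> j < k \<Longrightarrow> l < k \<Longrightarrow> distinct [i, j, l] \<Longrightarrow>
      det3 (P i) (P j) (P l) \<noteq> 0"
    and off_secants: "\<And>i j. i < k \<Longrightarrow> j < k \<Longrightarrow> i \<noteq> j \<Longrightarrow> det3 (P i) (P j) (P k) \<noteq> 0"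
  shows "is_linear_AOA 2 3 k (aoa_of_points P k)"
proof -
  let ?r = "\<lambda>x. map (\<lambda>i. dot3 (P i) x) [0..<k]" and ?y = "\<lambda>x. [dot3 (P k) x]"
  have card_triples: "card (UNIV :: ('a \<times> 'a \<times> 'a) set) = card (UNIV :: 'a set) ^ 3"
    by (simp flip: UNIV_Times_UNIV add: card_cartesian_product power3_eq_cube)
  have separate3: "x = x'"
    if "C \<subseteq> {..<k}" "card C = 3" "\<forall>i\<in>C. ?r x ! i = ?r x' ! i" for C x x'
  proof -
    obtain i j l where "C = {i, j, l}" "distinct [i, j, l]"
      using \<open>card C = 3\<close> by (auto simp: card_3_iff)
    with that show ?thesis
      by (intro eq_if_dot3_eq_det3_nonzero[OF no_three_collinear, of i j l]) auto
  qed
  have OA: "is_OA 3 k UNIV (range ?r)"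
    using \<open>3 \<le> k\<close> card_triples separate3 by (intro is_OA_if_columns_separate) auto
  have inj: "inj ?r"
    using separate3[of "{0, 1, 2}"] \<open>3 \<le> k\<close> by (auto simp: inj_def)
  have AOA: "is_AOA 2 3 k UNIV {y. length y = 3 - 2} (aoa_of_points P k)"
    unfolding aoa_of_points_def
  proof (rule is_AOA_if_columns_separate[OF _ _ _ _ _ OA inj])
    show "card {y :: 'a list. length y = 3 - 2} = card (UNIV :: 'a set) ^ (3 - 2)"
      using card_lists_length_eq[of "UNIV :: 'a set" 1] by simp
    show "x = x'"
      if "C \<subseteq> {..<k}" "card C = 2" "\<forall>i\<in>C. ?r x ! i = ?r x' ! i" "?y x = ?y x'" for C x x'
    proof -
      obtain i j where "C = {i, j}" "i \<noteq> j"
        using \<open>card C = 2\<close> by (auto simp: card_2_iff)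
      with that show ?thesis
        by (intro eq_if_dot3_eq_det3_nonzero[OF off_secants, of i j]) auto
    qed
  qed (use finite_lists_length_eq[of "UNIV :: 'a set" 1] in auto)
  show ?thesis
    using AOA is_lin_subspace_aoa_of_points[of k P] by (simp add: is_linear_AOA_def)
qed

text \<open>Columns 0, \<dots>, q - 1 are the affine points (1, t, t^2) of the conic, t = e i; column q is its
  point (0, 0, 1) at infinity and column q + 1 the nucleus (0, 1, 0).\<close>

definition hyperoval_point :: "(nat \<Rightarrow> 'a::comm_ring_1) \<Rightarrow> nat \<Rightarrow> nat \<Rightarrow> 'a \<times> 'a \<times> 'a" where
  "hyperoval_point e q i =
     (if i < q then (1, e i, e i ^ 2) else if i = q then (0, 0, 1) else (0, 1, 0))"

lemma det3_conic_points:
  fixes s t u :: "'a::comm_ring_1"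
  shows "det3 (1, s, s^2) (1, t, t^2) (1, u, u^2) = (t - s) * (u - s) * (u - t)"
    and "det3 (1, s, s^2) (1, t, t^2) (0, 0, 1) = t - s"
    and "det3 (1, s, s^2) (1, t, t^2) (0, 1, 0) = s^2 - t^2"
    and "det3 (1, s, s^2) (0, 0, 1) (0, 1, 0) = -1"
  by (simp_all add: algebra_simps power2_eq_square)

lemma det3_swap:
  "det3 v u w = - det3 u v w" "det3 u w v = - det3 u v w"
  by (cases u; cases v; cases w; simp add: algebra_simps)+

lemma hyperoval_no_three_collinear:
  fixes e :: "nat \<Rightarrow> 'a::idom"
  assumes "inj_on e {..<q}" "i < q + 1" "j < q + 1" "l < q + 1" "distinct [i, j, l]"
  shows "det3 (hyperoval_point e q i) (hyperoval_point e q j) (hyperoval_point e q l) \<noteq> 0"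
proof -
  let ?P = "hyperoval_point e q"
  have e_neq: "e a \<noteq> e b" if "a < q" "b < q" "a \<noteq> b" for a b
    using assms(1) that by (auto dest: inj_onD)
  have secant: "det3 (?P a) (?P b) (?P q) \<noteq> 0" if "a < q" "b < q" "a \<noteq> b" for a b
    using e_neq[OF that] that by (simp add: hyperoval_point_def det3_conic_points del: det3.simps)
  consider "i < q" "j < q" "l < q" | "l = q" | "j = q" | "i = q"
    using assms(2-4) by linarith
  then show ?thesis
  proof cases
    case 1
    then show ?thesis
      using assms(5) e_neq[of j i] e_neq[of l i] e_neq[of l j]
      by (simp add: hyperoval_point_def det3_conic_points del: det3.simps)
  next
    case 2
    then show ?thesis
      using assms(2-5) secant by simp
  next
    case 3
    then show ?thesis
      using assms(2-5) secant[of i l] det3_swap(2)[of "?P i" "?P l" "?P q"] by simp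
  next
    case 4
    then show ?thesis
      using assms(2-5) secant[of j l] det3_swap[of "?P j" "?P q" "?P l"] by simp
  qed
qed

lemma hyperoval_nucleus_off_secants:
  fixes e :: "nat \<Rightarrow> 'a::idom"
  assumes "(2::'a) = 0" "inj_on e {..<q}" "i < q + 1" "j < q + 1" "i \<noteq> j"
  shows "det3 (hyperoval_point e q i) (hyperoval_point e q j) (hyperoval_point e q (q + 1)) \<noteq> 0"
proof -
  let ?P = "hyperoval_point e q"
  have frobenius: "s^2 - t^2 = (s - t)^2" for s t :: 'a
  proof -
    have "(s - t)^2 - (s^2 - t^2) = 2 * (t^2 - s * t)"
      by (simp add: algebra_simps power2_eq_square)
    then show ?thesis
      using assms(1) by simp
  qed
  moreover have "e i \<noteq> e j" if "i < q" "j < q"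
    using assms(2,5) that by (auto dest: inj_onD)
  moreover have "det3 (?P q) (?P j) (?P (q + 1)) = - det3 (?P j) (?P q) (?P (q + 1))"
    by (rule det3_swap(1))
  ultimately show ?thesis
    using assms(3-5) by (auto simp: hyperoval_point_def det3_conic_points simp del: det3.simps)
qed

lemma two_eq_zero_if_card_power_of_two:
  assumes "card (UNIV :: 'a::{finite,field} set) = 2 ^ m"
  shows "(2::'a) = 0"
proof -
  have "prime CHAR('a)"
    by (simp add: finite_imp_CHAR_pos prime_CHAR_semidom)
  moreover have "CHAR('a) dvd 2 ^ m"
    using CHAR_dvd_CARD[where 'a='a] assms by simp
  ultimately have "CHAR('a) = 2"
    by (metis prime_dvd_power_nat_iff prime_nat_iff two_is_prime_nat bot_nat_0.not_eq_extremum
        power_0 nat_dvd_1_iff_1 not_prime_1)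
  then show ?thesis
    using of_nat_CHAR[where 'a='a] by simp
qed

theorem theorem3p8:
  fixes q :: nat
  assumes "card (UNIV :: 'a set) = q"
    and "\<exists>m. q = 2 ^ m"
    and "q \<ge> 4"
  shows "\<exists>A :: ('a::{finite,field} list \<times> 'a list) set. is_linear_AOA 2 3 (q + 1) A"
proof -
  have char2: "(2::'a) = 0"
    using assms(1,2) two_eq_zero_if_card_power_of_two by blast
  obtain e where "bij_betw e {..<q} (UNIV :: 'a set)"
    using ex_bij_betw_nat_finite[of "UNIV :: 'a set"] assms(1) by (auto simp: atLeast0LessThan)
  then have "inj_on e {..<q}"
    by (simp add: bij_betw_def)
  then have "is_linear_AOA 2 3 (q + 1) (aoa_of_points (hyperoval_point e q) (q + 1))"
    using assms(3) hyperoval_no_three_collinear hyperoval_nucleus_off_secants[OF char2]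
    by (intro is_linear_AOA_aoa_of_points) (simp_all del: distinct.simps)
  then show ?thesis ..
qed

end
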